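(* There are infinitely many SP twins, i.e. infinitely many natural numbers $m$ such that both $m$ and $m+1$ are SP numbers.
   Context: A Square-Prime (SP) number is a positive integer of the form $p a^2$ where $p$ is a prime and $a \ge 2$ is a natural number (i.e. $a \neq 1$). An SP twin is a pair of consecutive natural numbers $m, m+1$ that are both SP numbers (e.g. $27 = 3\cdot 9$ and $28 = 7 \cdot 4$). *)

theory Defs
  imports "HOL-Computational_Algebra.Primes"
begin

definition SP :: "nat \<Rightarrow> bool" where
  "SP n \<longleftrightarrow> (\<exists>p a. prime p \<and> a \<ge> 2 \<and> n = p * a ^ 2)"

end

theory Submission
  imports Defs
begin

text \<open>If 3 y^2 = 2 x^2 + 1 with x \<ge> 2, then 2 x^2 and 3 y^2 are consecutive SP numbers.
  This Pell-type equation has infinitely many solutions: (11, 9) is one, and new ones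
  arise by multiplying 3 y + x \<surd>6 by the unit 5 + 2 \<surd>6 of norm 1, which gives
  (x, y) \<mapsto> (5 x + 6 y, 4 x + 5 y).\<close>

lemma SP_twin_of_pell_solution:
  fixes x y :: nat
  assumes pell: "3 * y\<^sup>2 = 2 * x\<^sup>2 + 1" and "x \<ge> 2"
  shows "SP (2 * x\<^sup>2) \<and> SP (2 * x\<^sup>2 + 1)"
proof -
  have "y \<ge> 2"
  proof (rule ccontr)
    assume "\<not> y \<ge> 2"
    then have "y\<^sup>2 \<le> 1" using power_mono[of y 1 2] by simp
    moreover have "x\<^sup>2 \<ge> 4" using power_mono[OF \<open>x \<ge> 2\<close>, of 2] by simp
    ultimately show False using pell by linarith
  qed
  have "SP (2 * x\<^sup>2)" unfolding SP_def using \<open>x \<ge> 2\<close> by (intro exI[of _ 2] exI[of _ x]) auto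
  moreover have "SP (2 * x\<^sup>2 + 1)" unfolding SP_def using pell \<open>y \<ge> 2\<close>
    by (intro exI[of _ 3] exI[of _ y]) auto
  ultimately show ?thesis ..
qed

lemma pell_step_solution:
  fixes x y :: nat
  assumes "3 * y\<^sup>2 = 2 * x\<^sup>2 + 1"
  shows "3 * (4 * x + 5 * y)\<^sup>2 = 2 * (5 * x + 6 * y)\<^sup>2 + 1"
proof -
  have "3 * (4 * x + 5 * y)\<^sup>2 + 2 * x\<^sup>2 = 2 * (5 * x + 6 * y)\<^sup>2 + 3 * y\<^sup>2"
    by (simp add: power2_eq_square algebra_simps)
  then show ?thesis using assms by linarith
qed

fun pell_solution :: "nat \<Rightarrow> nat \<times> nat" where
  "pell_solution 0 = (11, 9)"
| "pell_solution (Suc n) =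
    (let (x, y) = pell_solution n in (5 * x + 6 * y, 4 * x + 5 * y))"

lemma pell_solution_eq: "pell_solution n = (x, y) \<Longrightarrow> 3 * y\<^sup>2 = 2 * x\<^sup>2 + 1"
proof (induction n arbitrary: x y)
  case 0
  then show ?case by simp
next
  case (Suc n)
  obtain x' y' where "pell_solution n = (x', y')" by fastforce
  with Suc show ?case using pell_step_solution[of y' x'] by auto
qed

lemma strict_mono_pell_solution_fst: "strict_mono (\<lambda>n. fst (pell_solution n))"
  unfolding strict_mono_Suc_iff
proof
  fix n
  obtain x y where xy: "pell_solution n = (x, y)" by fastforce
  then have "y > 0" using pell_solution_eq[OF xy] by (cases y) auto
  then show "fst (pell_solution n) < fst (pell_solution (Suc n))" using xy by simp
qed

lemma pell_solution_fst_ge: "fst (pell_solution n) \<ge> 11"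
proof -
  have "fst (pell_solution 0) \<le> fst (pell_solution n)"
    using strict_mono_less_eq[OF strict_mono_pell_solution_fst] by blast
  then show ?thesis by simp
qed

theorem mainTheorem4:
  shows "infinite {m :: nat. SP m \<and> SP (m + 1)}"
proof -
  let ?m = "\<lambda>n. 2 * (fst (pell_solution n))\<^sup>2"
  have "strict_mono ?m"
  proof (rule strict_monoI)
    fix a b :: nat
    assume "a < b"
    with strict_mono_pell_solution_fst have "fst (pell_solution a) < fst (pell_solution b)"
      by (rule strict_monoD)
    then show "?m a < ?m b" by (simp add: power_strict_mono)
  qed
  then have "infinite (range ?m)"
    using strict_mono_imp_inj_on finite_imageD infinite_UNIV_nat by metis
  moreover have "range ?m \<subseteq> {m. SP m \<and> SP (m + 1)}"
  proof
    fix m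
    assume "m \<in> range ?m"
    then obtain n where m: "m = ?m n" by blast
    obtain x y where xy: "pell_solution n = (x, y)" by fastforce
    have "x \<ge> 2" using pell_solution_fst_ge[of n] xy by simp
    then show "m \<in> {m. SP m \<and> SP (m + 1)}"
      using SP_twin_of_pell_solution[OF pell_solution_eq[OF xy]] m xy by simp
  qed
  ultimately show ?thesis using infinite_super by blast
qed

end
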